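(* Let $m,n\in\mathbf{N}$ and let $\nu$ be a partition of $n-1$ with at most $m$ parts. Then there is a unique set family of shape $(m^n)$ and type $(m^n)\star\nu$.
   Context: A set family of shape $(m^n)$ is a collection of $n$ distinct $m$-subsets of $\mathbf{N}$; it has type $\lambda$ (largest part $a$, conjugate $\lambda'$) if for each $i\in\{1,\dots,a\}$ exactly $\lambda'_i$ of its sets contain $i$. For a partition $\nu$ of $n-1$ with $k\le m$ parts, $(m^n)\star\nu$ is the partition obtained from the Young diagram of $(m^n)$ by, for each $i$ with $1\le i\le k$, deleting $\nu_i$ boxes (from the bottom) of column $m+1-i$ and adding $\nu_i$ boxes to the end of row $i$. *)

theory Defs
  imports Main
begin

definition is_partition_of :: "nat \<Rightarrow> nat list \<Rightarrow> bool" where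
  "is_partition_of k \<nu> \<longleftrightarrow>
     (\<forall>x\<in>set \<nu>. 0 < x) \<and> sorted_wrt (\<ge>) \<nu> \<and> sum_list \<nu> = k"

text \<open>Conjugate partition: the i-th part (i >= 1) is the number of parts of size at least i.\<close>
definition conj_part :: "nat list \<Rightarrow> nat \<Rightarrow> nat" where
  "conj_part lam i = length (filter (\<lambda>x. i \<le> x) lam)"

definition largest_part :: "nat list \<Rightarrow> nat" where
  "largest_part lam = foldr max lam 0"

definition has_shape :: "nat \<Rightarrow> nat \<Rightarrow> nat set set \<Rightarrow> bool" where
  "has_shape m n F \<longleftrightarrow> finite F \<and> card F = n \<and>
     (\<forall>S\<in>F. finite S \<and> card S = m \<and> S \<subseteq> {1..})"

definition has_type :: "nat set set \<Rightarrow> nat list \<Rightarrow> bool" where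
  "has_type F lam \<longleftrightarrow>
     (\<forall>i\<in>{1..largest_part lam}. card {S\<in>F. i \<in> S} = conj_part lam i)"

text \<open>Young diagram (cells (row, column), 1-indexed) of (m^n) star nu.\<close>
definition star_diagram :: "nat \<Rightarrow> nat \<Rightarrow> nat list \<Rightarrow> (nat \<times> nat) set" where
  "star_diagram m n \<nu> =
     ({(r, c). 1 \<le> r \<and> r \<le> n \<and> 1 \<le> c \<and> c \<le> m}
       - {(r, c). \<exists>i. 1 \<le> i \<and> i \<le> length \<nu> \<and> c = m + 1 - i
                      \<and> n - \<nu> ! (i - 1) < r \<and> r \<le> n})
     \<union> {(r, c). 1 \<le> r \<and> r \<le> length \<nu> \<and> m < c \<and> c \<le> m + \<nu> ! (r - 1)}"

definition star :: "nat \<Rightarrow> nat \<Rightarrow> nat list \<Rightarrow> nat list" where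
  "star m n \<nu> = map (\<lambda>r. card {c. (r, c) \<in> star_diagram m n \<nu>}) [1..<n+1]"

end

theory Submission
  imports Defs
begin

text \<open>
  By the type condition on the columns 1..m of (m^n) \<star> \<nu>, the members of a suitable family F miss
  n - 1 = |F| - 1 elements of [m] = {1..m} in total, counted with multiplicity. A member other
  than [m] misses at least one of them, so every member is either [m] or of the form
  [m] - {a} \<union> {b} with a \<le> m < b. Encode the latter by the cell (m + 1 - a, b - m). The type
  prescribes the row lengths \<nu>_i and the column lengths \<nu>'_j of the resulting set of cells,
  and the Young diagram of \<nu> is the only set of cells with these line counts: a cell to the right
  of row i leaves row i short within the first \<nu>_i columns, while the column lengths
  force those columns to be full. So F is [m] together with the sets of the cells of \<nu>,
  and this family does have the required type.
\<close>

section \<open>Counting cells\<close>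

lemma card_Diff_commute:
  assumes "finite A" "finite B" "card A = card B"
  shows "card (A - B) = card (B - A)"
  using card_Int_Diff[OF assms(1), of B] card_Int_Diff[OF assms(2), of A] assms(3)
  by (simp add: Int_commute)

lemma sum_card_Diff_eq_sum_card_not_mem:
  assumes "finite F" "finite A"
  shows "(\<Sum>S\<in>F. card (A - S)) = (\<Sum>x\<in>A. card {S\<in>F. x \<notin> S})"
proof -
  have "(\<Sum>S\<in>F. card (A - S)) = (\<Sum>S\<in>F. \<Sum>x\<in>{x\<in>A. x \<notin> S}. 1)"
    by (simp add: set_diff_eq)
  also have "\<dots> = (\<Sum>x\<in>A. \<Sum>S\<in>{S\<in>F. x \<notin> S}. 1)"
    by (rule sum.swap_restrict[OF assms])
  finally show ?thesis by simp
qed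

lemma card_Diff_le_1_if_sum_card_Diff_le:
  fixes A :: "'a set" and F :: "'a set set"
  assumes fin: "finite A" "finite F"
    and card_eq: "\<And>T. T \<in> F \<Longrightarrow> finite T \<and> card T = card A"
    and sum_le: "(\<Sum>T\<in>F. card (A - T)) \<le> card F - 1"
    and S: "S \<in> F"
  shows "card (A - S) \<le> 1"
proof (rule ccontr)
  assume big: "\<not> card (A - S) \<le> 1"
  have pos: "1 \<le> card (A - T)" if "T \<in> F" "T \<noteq> A" for T
  proof (rule ccontr)
    assume "\<not> 1 \<le> card (A - T)"
    then have "card (A - T) = 0" by simp
    then have "A \<subseteq> T" using fin(1) by simp
    then show False using card_subset_eq card_eq that by metis
  qed
  have "S \<noteq> A"
  proof
    assume "S = A"
    then show False using big by simp
  qed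
  have "card (F - {A}) = (\<Sum>T\<in>F - {A}. 1)" by simp
  also have "\<dots> < (\<Sum>T\<in>F - {A}. card (A - T))"
  proof (rule sum_strict_mono_ex1)
    show "finite (F - {A})" using fin(2) by simp
    show "\<forall>T\<in>F - {A}. 1 \<le> card (A - T)" using pos by blast
    show "\<exists>T\<in>F - {A}. 1 < card (A - T)" using S big \<open>S \<noteq> A\<close> by (intro bexI[of _ S]) auto
  qed
  also have "\<dots> \<le> (\<Sum>T\<in>F. card (A - T))"
    using fin(2) by (intro sum_mono2) auto
  also have "\<dots> \<le> card (F - {A})"
    using sum_le diff_card_le_card_Diff[of "{A}" F] by simp
  finally show False by simp
qed

lemma card_eq_sum_card_rows:
  fixes R :: "('a \<times> 'b) set"
  assumes "finite R" "finite I" "fst ` R \<subseteq> I"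
  shows "card R = (\<Sum>i\<in>I. card {j. (i, j) \<in> R})"
proof -
  have "R = Sigma I (\<lambda>i. {j. (i, j) \<in> R})" using assms(3) by force
  moreover have "finite {j. (i, j) \<in> R}" for i
    by (rule finite_subset[OF _ finite_imageI[OF assms(1), of snd]]) force
  ultimately show ?thesis using assms(2) by (metis card_SigmaI)
qed

lemma card_eq_sum_card_columns:
  fixes R :: "('a \<times> 'b) set"
  assumes "finite R" "finite J" "snd ` R \<subseteq> J"
  shows "card R = (\<Sum>j\<in>J. card {i. (i, j) \<in> R})"
proof -
  have swap_column: "{i. (j, i) \<in> prod.swap ` R} = {i. (i, j) \<in> R}" for j by force
  have "card R = card (prod.swap ` R)" by (simp add: card_image)
  also have "\<dots> = (\<Sum>j\<in>J. card {i. (j, i) \<in> prod.swap ` R})"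
    using assms by (intro card_eq_sum_card_rows) (auto simp: image_image)
  finally show ?thesis by (simp add: swap_column)
qed

lemma card_first_columns:
  fixes R :: "('a \<times> nat) set"
  assumes "finite R" "snd ` R \<subseteq> {1..}"
  shows "card {p\<in>R. snd p \<le> t} = (\<Sum>j\<in>{1..t}. card {i. (i, j) \<in> R})"
proof -
  have "card {p\<in>R. snd p \<le> t} = (\<Sum>j\<in>{1..t}. card {i. (i, j) \<in> {p\<in>R. snd p \<le> t}})"
    using assms by (intro card_eq_sum_card_columns) auto
  also have "\<dots> = (\<Sum>j\<in>{1..t}. card {i. (i, j) \<in> R})"
    by (intro sum.cong refl) auto
  finally show ?thesis .
qed

lemma card_first_columns_left_justified:
  assumes "finite I"
  shows "card {(i, j). i \<in> I \<and> 1 \<le> j \<and> j \<le> \<mu> i \<and> j \<le> t} = (\<Sum>i\<in>I. min (\<mu> i) t)"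
proof -
  have "{(i, j). i \<in> I \<and> 1 \<le> j \<and> j \<le> \<mu> i \<and> j \<le> t} = Sigma I (\<lambda>i. {1..min (\<mu> i) t})"
    by auto
  then show ?thesis using assms by simp
qed

lemma subset_left_justified_if_line_counts:
  fixes P :: "('a \<times> nat) set" and \<mu> :: "'a \<Rightarrow> nat"
  assumes fin: "finite I" "finite P" and P_sub: "P \<subseteq> I \<times> {1..}"
    and rows: "\<And>i. i \<in> I \<Longrightarrow> card {j. (i, j) \<in> P} = \<mu> i"
    and cols: "\<And>i j. i \<in> I \<Longrightarrow> 1 \<le> j \<Longrightarrow> j \<le> \<mu> i \<Longrightarrow>
                 card {i'. (i', j) \<in> P} = card {i'\<in>I. j \<le> \<mu> i'}"
  shows "P \<subseteq> {(i, j). i \<in> I \<and> 1 \<le> j \<and> j \<le> \<mu> i}" (is "P \<subseteq> ?Q")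
proof (rule subsetI, rule ccontr)
  fix p assume "p \<in> P" "p \<notin> ?Q"
  then obtain i0 j0 where p: "(i0, j0) \<in> P" "i0 \<in> I" "\<mu> i0 < j0"
    using P_sub by (cases p) force
  define t where "t = \<mu> i0"
  define Pt where "Pt = {p\<in>P. snd p \<le> t}"
  have fin_row: "finite {j. (i, j) \<in> P}" for i
    by (rule finite_subset[OF _ finite_imageI[OF fin(2), of snd]]) force
  have row_le: "card {j. (i, j) \<in> Pt} \<le> min (\<mu> i) t" if "i \<in> I" for i
  proof -
    have "card {j. (i, j) \<in> Pt} \<le> card {j. (i, j) \<in> P}"
      using fin_row by (intro card_mono) (auto simp: Pt_def)
    moreover have "card {j. (i, j) \<in> Pt} \<le> card {1..t}"
      using P_sub by (intro card_mono) (auto simp: Pt_def)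
    ultimately show ?thesis using rows[OF that] by simp
  qed
  have row_lt: "card {j. (i0, j) \<in> Pt} < min (\<mu> i0) t"
  proof -
    have "card {j. (i0, j) \<in> Pt} \<le> card ({j. (i0, j) \<in> P} - {j0})"
      using fin_row p(3) by (intro card_mono) (auto simp: Pt_def t_def)
    also have "\<dots> < \<mu> i0"
      using card_Diff1_less[OF fin_row, of j0 i0] p(1) rows[OF p(2)] by simp
    finally show ?thesis by (simp add: t_def)
  qed
  have "card Pt = (\<Sum>i\<in>I. card {j. (i, j) \<in> Pt})"
    using fin P_sub by (intro card_eq_sum_card_rows) (auto simp: Pt_def)
  also have "\<dots> < (\<Sum>i\<in>I. min (\<mu> i) t)"
    using fin(1) row_le row_lt p(2) by (intro sum_strict_mono_ex1) auto
  also have "\<dots> = card {p\<in>?Q. snd p \<le> t}"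
    using card_first_columns_left_justified[OF fin(1)] by (simp add: case_prod_unfold conj_ac)
  also have "\<dots> = (\<Sum>j\<in>{1..t}. card {i. (i, j) \<in> ?Q})"
  proof (rule card_first_columns)
    have "?Q = Sigma I (\<lambda>i. {1..\<mu> i})" by auto
    then show "finite ?Q" using fin(1) by simp
  qed auto
  also have "\<dots> = (\<Sum>j\<in>{1..t}. card {i. (i, j) \<in> P})"
    using cols[OF p(2)] by (intro sum.cong refl) (auto simp: t_def)
  also have "\<dots> = card Pt"
    unfolding Pt_def using fin(2) P_sub by (intro card_first_columns[symmetric]) auto
  finally show False by simp
qed

section \<open>Partitions as lists of row lengths\<close>

lemma le_largest_part: "x \<in> set xs \<Longrightarrow> x \<le> largest_part xs"
  by (induction xs) (auto simp: largest_part_def)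

lemma largest_part_le: "(\<And>x. x \<in> set xs \<Longrightarrow> x \<le> b) \<Longrightarrow> largest_part xs \<le> b"
  by (induction xs) (auto simp: largest_part_def)

lemma down_closed_eq_atLeastAtMost_card:
  fixes A :: "nat set"
  assumes "finite A" "A \<subseteq> {1..}" "\<And>c c'. c \<in> A \<Longrightarrow> 1 \<le> c' \<Longrightarrow> c' \<le> c \<Longrightarrow> c' \<in> A"
  shows "A = {1..card A}"
proof (cases "A = {}")
  case False
  have "A = {1..Max A}"
    using assms(1,2) assms(3)[OF Max_in[OF assms(1) False]] by auto
  then show ?thesis by (metis card_atLeastAtMost diff_Suc_1)
qed simp

lemma conj_part_row_lengths:
  fixes D :: "(nat \<times> nat) set"
  assumes rows: "\<And>r. r \<in> {1..n} \<Longrightarrow> {c. (r, c) \<in> D} = {1..card {c. (r, c) \<in> D}}"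
    and "1 \<le> x"
  shows "conj_part (map (\<lambda>r. card {c. (r, c) \<in> D}) [1..<n+1]) x = card {r\<in>{1..n}. (r, x) \<in> D}"
proof -
  have "conj_part (map (\<lambda>r. card {c. (r, c) \<in> D}) [1..<n+1]) x
      = length (filter (\<lambda>r. x \<le> card {c. (r, c) \<in> D}) [1..<n+1])"
    unfolding conj_part_def filter_map length_map comp_def ..
  also have "\<dots> = card (set (filter (\<lambda>r. x \<le> card {c. (r, c) \<in> D}) [1..<n+1]))"
    by (rule distinct_card[symmetric]) (rule distinct_filter, rule distinct_upt)
  also have "set (filter (\<lambda>r. x \<le> card {c. (r, c) \<in> D}) [1..<n+1])
      = {r\<in>{1..n}. x \<le> card {c. (r, c) \<in> D}}"
    by auto
  also have "{r\<in>{1..n}. x \<le> card {c. (r, c) \<in> D}} = {r\<in>{1..n}. (r, x) \<in> D}"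
  proof (intro Collect_cong conj_cong refl)
    fix r assume "r \<in> {1..n}"
    then show "x \<le> card {c. (r, c) \<in> D} \<longleftrightarrow> (r, x) \<in> D"
      using rows[of r] \<open>1 \<le> x\<close> by (metis atLeastAtMost_iff mem_Collect_eq)
  qed
  finally show ?thesis .
qed

lemma length_le_sum_list: "\<forall>x\<in>set xs. (0::nat) < x \<Longrightarrow> length xs \<le> sum_list xs"
  by (induction xs) auto

lemma ball_atLeastAtMost_add_iff:
  fixes a b :: nat
  shows "(\<forall>x\<in>{1..a + b}. P x) \<longleftrightarrow> (\<forall>x\<in>{1..a}. P x) \<and> (\<forall>j\<in>{1..b}. P (a + j))"
proof
  assume "\<forall>x\<in>{1..a + b}. P x"
  then show "(\<forall>x\<in>{1..a}. P x) \<and> (\<forall>j\<in>{1..b}. P (a + j))" by auto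
next
  assume "(\<forall>x\<in>{1..a}. P x) \<and> (\<forall>j\<in>{1..b}. P (a + j))"
  then have low: "\<forall>x\<in>{1..a}. P x" and high: "\<forall>j\<in>{1..b}. P (a + j)" by auto
  show "\<forall>x\<in>{1..a + b}. P x"
  proof
    fix x assume x: "x \<in> {1..a + b}"
    show "P x"
    proof (cases "x \<le> a")
      case False
      then have "P (a + (x - a))" using x by (intro bspec[OF high]) auto
      then show ?thesis using False by simp
    qed (use low x in auto)
  qed
qed

lemma ball_atLeastAtMost_reflect_iff:
  fixes m :: nat
  shows "(\<forall>x\<in>{1..m}. P x) \<longleftrightarrow> (\<forall>i\<in>{1..m}. P (m + 1 - i))"
  (is "?all \<longleftrightarrow> ?reflected")
proof
  assume h: ?all
  show ?reflected
  proof
    fix i assume "i \<in> {1..m}"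
    then show "P (m + 1 - i)" by (intro bspec[OF h]) auto
  qed
next
  assume h: ?reflected
  show ?all
  proof
    fix x assume x: "x \<in> {1..m}"
    have "P (m + 1 - (m + 1 - x))" using x by (intro bspec[OF h]) auto
    then show "P x" using x by simp
  qed
qed

section \<open>The set attached to a cell\<close>

text \<open>The box (i, j) of \<nu> is moved by \<open>\<star>\<close> from column m + 1 - i to column m + j.\<close>

definition cell_set :: "nat \<Rightarrow> nat \<times> nat \<Rightarrow> nat set" where
  "cell_set m = (\<lambda>(i, j). insert (m + j) ({1..m} - {m + 1 - i}))"

definition cells_of_family :: "nat \<Rightarrow> nat set set \<Rightarrow> (nat \<times> nat) set" where
  "cells_of_family m G = {c \<in> {1..m} \<times> {1..}. cell_set m c \<in> G}"

lemma not_mem_cell_set_iff: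
  "i \<in> {1..m} \<Longrightarrow> 1 \<le> j \<Longrightarrow> x \<in> {1..m} \<Longrightarrow> x \<notin> cell_set m (i, j) \<longleftrightarrow> i = m + 1 - x"
  by (auto simp: cell_set_def)

lemma mem_cell_set_iff_gt: "m < y \<Longrightarrow> y \<in> cell_set m (i, j) \<longleftrightarrow> y = m + j"
  by (auto simp: cell_set_def)

lemma cell_set_subset: "1 \<le> j \<Longrightarrow> cell_set m (i, j) \<subseteq> {1..}"
  by (auto simp: cell_set_def)

lemma cell_set_ne_atLeastAtMost: "1 \<le> j \<Longrightarrow> cell_set m (i, j) \<noteq> {1..m}"
proof
  assume "1 \<le> j" "cell_set m (i, j) = {1..m}"
  moreover have "m + j \<in> cell_set m (i, j)" by (simp add: cell_set_def)
  ultimately show False by auto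
qed

lemma card_cell_set: "i \<in> {1..m} \<Longrightarrow> 1 \<le> j \<Longrightarrow> card (cell_set m (i, j)) = m"
  by (auto simp: cell_set_def card_Diff_singleton_if)

lemma inj_on_cell_set: "inj_on (cell_set m) ({1..m} \<times> {1..})"
proof (rule inj_onI, clarify)
  fix i j i' j' :: nat
  assume i: "i \<in> {1..m}" "i' \<in> {1..m}" and j: "1 \<le> j" "1 \<le> j'"
    and eq: "cell_set m (i, j) = cell_set m (i', j')"
  have x: "m + 1 - i \<in> {1..m}" using i by auto
  have "m + 1 - i \<notin> cell_set m (i', j')" using eq not_mem_cell_set_iff[OF i(1) j(1) x] i(1) by simp
  then have "i = i'" using i not_mem_cell_set_iff[OF i(2) j(2) x] by auto
  moreover have "m + j \<in> cell_set m (i, j)" by (simp add: cell_set_def)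
  then have "m + j \<in> cell_set m (i', j')" using eq by simp
  then have "j = j'" using j mem_cell_set_iff_gt[of m "m + j"] by simp
  ultimately show "i = i' \<and> j = j'" ..
qed

lemma cell_set_if_card_Diff_eq_1:
  assumes "finite S" "card S = m" "S \<subseteq> {1..}" and missing: "card ({1..m} - S) = 1"
  shows "S \<in> cell_set m ` ({1..m} \<times> {1..})"
proof -
  obtain a where a: "{1..m} - S = {a}" using missing by (meson card_1_singletonE)
  have "card (S - {1..m}) = 1" using assms card_Diff_commute[of S "{1..m}"] by simp
  then obtain b where b: "S - {1..m} = {b}" by (meson card_1_singletonE)
  have "b \<in> S" "b \<notin> {1..m}" using b by auto
  then have ab: "a \<in> {1..m}" "m < b" using a assms(3) by auto
  have "S = insert b ({1..m} - {a})" using a b by blast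
  also have "\<dots> = cell_set m (m + 1 - a, b - m)" using ab by (simp add: cell_set_def)
  finally have "S = cell_set m (m + 1 - a, b - m)" .
  moreover have "(m + 1 - a, b - m) \<in> {1..m} \<times> {1..}" using ab by auto
  ultimately show ?thesis by blast
qed

lemma inj_on_cell_set_row: "inj_on (\<lambda>j. cell_set m (i, j)) {j. (i, j) \<in> cells_of_family m G}"
proof (rule inj_onI)
  fix j j' assume "j \<in> {j. (i, j) \<in> cells_of_family m G}" "j' \<in> {j. (i, j) \<in> cells_of_family m G}"
    and eq: "cell_set m (i, j) = cell_set m (i, j')"
  then have "(i, j) = (i, j')"
    by (intro inj_onD[OF inj_on_cell_set eq]) (auto simp: cells_of_family_def)
  then show "j = j'" by simp
qed

lemma inj_on_cell_set_column: "inj_on (\<lambda>i. cell_set m (i, j)) {i. (i, j) \<in> cells_of_family m G}"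
proof (rule inj_onI)
  fix i i' assume "i \<in> {i. (i, j) \<in> cells_of_family m G}" "i' \<in> {i. (i, j) \<in> cells_of_family m G}"
    and eq: "cell_set m (i, j) = cell_set m (i', j)"
  then have "(i, j) = (i', j)"
    by (intro inj_onD[OF inj_on_cell_set eq]) (auto simp: cells_of_family_def)
  then show "i = i'" by simp
qed

lemma card_not_mem_eq_card_row:
  assumes "i \<in> {1..m}"
    and G: "G \<subseteq> insert {1..m} (cell_set m ` ({1..m} \<times> {1..}))"
  shows "card {S\<in>G. m + 1 - i \<notin> S} = card {j. (i, j) \<in> cells_of_family m G}"
proof -
  have x: "m + 1 - i \<in> {1..m}" and i: "m + 1 - (m + 1 - i) = i" using assms(1) by auto
  have "{S\<in>G. m + 1 - i \<notin> S} = (\<lambda>j. cell_set m (i, j)) ` {j. (i, j) \<in> cells_of_family m G}"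
  proof (intro set_eqI iffI)
    fix S assume S: "S \<in> {S\<in>G. m + 1 - i \<notin> S}"
    then have "S \<noteq> {1..m}" using x by auto
    then have "S \<in> cell_set m ` ({1..m} \<times> {1..})" using G S by blast
    then obtain i' j' where c: "i' \<in> {1..m}" "1 \<le> j'" "S = cell_set m (i', j')"
      by blast
    have "m + 1 - i \<notin> cell_set m (i', j')" using S c(3) by simp
    then have "i' = i" using not_mem_cell_set_iff[OF c(1,2) x] i by simp
    then show "S \<in> (\<lambda>j. cell_set m (i, j)) ` {j. (i, j) \<in> cells_of_family m G}"
      using S c by (auto simp: cells_of_family_def)
  next
    fix S assume "S \<in> (\<lambda>j. cell_set m (i, j)) ` {j. (i, j) \<in> cells_of_family m G}"
    then obtain j where "S \<in> G" "1 \<le> j" "S = cell_set m (i, j)"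
      by (auto simp: cells_of_family_def)
    then show "S \<in> {S\<in>G. m + 1 - i \<notin> S}"
      using not_mem_cell_set_iff[OF assms(1) _ x, of j] i by simp
  qed
  then show ?thesis by (simp add: card_image inj_on_cell_set_row)
qed

lemma card_mem_eq_card_column:
  assumes "1 \<le> j"
    and G: "G \<subseteq> insert {1..m} (cell_set m ` ({1..m} \<times> {1..}))"
  shows "card {S\<in>G. m + j \<in> S} = card {i. (i, j) \<in> cells_of_family m G}"
proof -
  have "{S\<in>G. m + j \<in> S} = (\<lambda>i. cell_set m (i, j)) ` {i. (i, j) \<in> cells_of_family m G}"
  proof (intro set_eqI iffI)
    fix S assume S: "S \<in> {S\<in>G. m + j \<in> S}"
    then have "S \<noteq> {1..m}" using assms(1) by auto
    then have "S \<in> cell_set m ` ({1..m} \<times> {1..})" using G S by blast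
    then obtain i' j' where c: "i' \<in> {1..m}" "1 \<le> j'" "S = cell_set m (i', j')"
      by blast
    have "m + j \<in> cell_set m (i', j')" using S c(3) by simp
    then have "j' = j" using mem_cell_set_iff_gt[of m "m + j" i' j'] assms(1) by simp
    then show "S \<in> (\<lambda>i. cell_set m (i, j)) ` {i. (i, j) \<in> cells_of_family m G}"
      using S c by (auto simp: cells_of_family_def)
  next
    fix S assume "S \<in> (\<lambda>i. cell_set m (i, j)) ` {i. (i, j) \<in> cells_of_family m G}"
    then show "S \<in> {S\<in>G. m + j \<in> S}" by (auto simp: cells_of_family_def cell_set_def)
  qed
  then show ?thesis by (simp add: card_image inj_on_cell_set_column)
qed

section \<open>The diagram (m^n) \<star> \<nu>\<close>

definition part :: "nat list \<Rightarrow> nat \<Rightarrow> nat" where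
  "part \<nu> i = (if 1 \<le> i \<and> i \<le> length \<nu> then \<nu> ! (i - 1) else 0)"

locale star_setting =
  fixes m n :: nat and \<nu> :: "nat list"
  assumes n_pos: "1 \<le> n"
    and partition: "is_partition_of (n - 1) \<nu>"
    and length_le: "length \<nu> \<le> m"
begin

abbreviation N :: "nat \<Rightarrow> nat" where "N \<equiv> part \<nu>"

abbreviation D :: "(nat \<times> nat) set" where "D \<equiv> star_diagram m n \<nu>"

lemma parts_pos: "\<forall>x\<in>set \<nu>. 0 < x"
  and parts_sorted: "sorted_wrt (\<ge>) \<nu>"
  and sum_list_parts: "sum_list \<nu> = n - 1"
  using partition by (auto simp: is_partition_of_def)

lemma part_antimono:
  assumes "1 \<le> i" "i \<le> i'"
  shows "N i' \<le> N i"
proof (cases "i' \<le> length \<nu> \<and> i < i'")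
  case True
  then show ?thesis using assms sorted_wrt_nth_less[OF parts_sorted, of "i - 1" "i' - 1"]
    by (auto simp: part_def)
qed (use assms in \<open>auto simp: part_def\<close>)

lemma part_pos_imp: "0 < N r \<Longrightarrow> 1 \<le> r \<and> r \<le> length \<nu>"
  by (auto simp: part_def split: if_splits)

lemma first_part_add_le:
  assumes r: "1 \<le> r" "r \<le> length \<nu>"
  shows "N 1 + r \<le> n"
proof -
  obtain x xs where \<nu>: "\<nu> = x # xs" using r by (cases \<nu>) auto
  have "length xs \<le> sum_list xs" using parts_pos \<nu> by (intro length_le_sum_list) auto
  then show ?thesis using sum_list_parts \<nu> r n_pos by (auto simp: part_def)
qed

lemma part_le_first: "N k \<le> N 1"
  using part_antimono[of 1 k] by (cases "k = 0") (auto simp: part_def)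

lemma part_less: "N k < n"
proof (cases "\<nu> = []")
  case False
  then show ?thesis using first_part_add_le[of 1] part_le_first[of k] by (cases \<nu>) auto
qed (use n_pos in \<open>auto simp: part_def\<close>)

lemma sum_parts: "(\<Sum>i\<in>{1..m}. N i) = n - 1"
proof -
  have "(\<Sum>i\<in>{1..m}. N i) = (\<Sum>i\<in>Suc ` {..<length \<nu>}. N i)"
    using length_le by (intro sum.mono_neutral_right) (auto simp: part_def image_Suc_lessThan)
  also have "\<dots> = (\<Sum>i<length \<nu>. \<nu> ! i)"
    by (subst sum.reindex) (auto simp: part_def)
  also have "\<dots> = n - 1" using sum_list_parts by (simp add: sum_list_sum_nth atLeast0LessThan)
  finally show ?thesis .
qed

lemma mem_star_diagram_iff: "(r, c) \<in> D \<longleftrightarrow>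
   (1 \<le> r \<and> r \<le> n \<and> 1 \<le> c \<and> c \<le> m \<and> r \<le> n - N (m + 1 - c)) \<or> (1 \<le> r \<and> m < c \<and> c \<le> m + N r)"
proof -
  have removed: "(\<exists>i. 1 \<le> i \<and> i \<le> length \<nu> \<and> c = m + 1 - i \<and> n - \<nu> ! (i - 1) < r \<and> r \<le> n)
      \<longleftrightarrow> n - N (m + 1 - c) < r \<and> r \<le> n" if "1 \<le> c" "c \<le> m"
  proof
    assume "\<exists>i. 1 \<le> i \<and> i \<le> length \<nu> \<and> c = m + 1 - i \<and> n - \<nu> ! (i - 1) < r \<and> r \<le> n"
    then obtain i where "1 \<le> i" "i \<le> length \<nu>" "c = m + 1 - i" "n - \<nu> ! (i - 1) < r" "r \<le> n"
      by blast
    moreover have "m + 1 - c = i" using calculation length_le by auto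
    ultimately show "n - N (m + 1 - c) < r \<and> r \<le> n" by (auto simp: part_def)
  next
    assume r: "n - N (m + 1 - c) < r \<and> r \<le> n"
    then have "0 < N (m + 1 - c)" by (cases "N (m + 1 - c) = 0") auto
    then have "1 \<le> m + 1 - c \<and> m + 1 - c \<le> length \<nu>" by (rule part_pos_imp)
    then show "\<exists>i. 1 \<le> i \<and> i \<le> length \<nu> \<and> c = m + 1 - i \<and> n - \<nu> ! (i - 1) < r \<and> r \<le> n"
      using r that by (intro exI[of _ "m + 1 - c"]) (auto simp: part_def)
  qed
  have added: "(1 \<le> r \<and> r \<le> length \<nu> \<and> m < c \<and> c \<le> m + \<nu> ! (r - 1))
      \<longleftrightarrow> (1 \<le> r \<and> m < c \<and> c \<le> m + N r)"
    by (auto simp: part_def)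
  show ?thesis
    unfolding star_diagram_def using removed added by auto
qed

lemma star_diagram_row_subset: "{c. (r, c) \<in> D} \<subseteq> {1..m + N r}"
  by (auto simp: mem_star_diagram_iff)

lemma star_diagram_row_down_closed:
  assumes r: "1 \<le> r" "r \<le> n" and c: "(r, c) \<in> D" and c': "1 \<le> c'" "c' \<le> c"
  shows "(r, c') \<in> D"
proof (cases "c \<le> m")
  case True
  then have "r \<le> n - N (m + 1 - c)" using c by (auto simp: mem_star_diagram_iff)
  moreover have "N (m + 1 - c') \<le> N (m + 1 - c)" using True c' by (intro part_antimono) auto
  ultimately show ?thesis using r c' True by (auto simp: mem_star_diagram_iff)
next
  case False
  then have c_le: "c \<le> m + N r" using c by (auto simp: mem_star_diagram_iff)
  show ?thesis
  proof (cases "c' \<le> m")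
    case True
    have "r \<le> length \<nu>" using part_pos_imp[of r] c_le False by auto
    then have "N 1 + r \<le> n" using first_part_add_le r by auto
    then have "r \<le> n - N (m + 1 - c')" using part_le_first[of "m + 1 - c'"] by auto
    then show ?thesis using r c' True by (auto simp: mem_star_diagram_iff)
  qed (use r c' c_le in \<open>auto simp: mem_star_diagram_iff\<close>)
qed

lemma star_diagram_row_eq: "r \<in> {1..n} \<Longrightarrow> {c. (r, c) \<in> D} = {1..card {c. (r, c) \<in> D}}"
  using star_diagram_row_subset[of r] star_diagram_row_down_closed[of r]
  by (intro down_closed_eq_atLeastAtMost_card) (auto intro: finite_subset)

lemma conj_part_star: "1 \<le> x \<Longrightarrow> conj_part (star m n \<nu>) x = card {r\<in>{1..n}. (r, x) \<in> D}"
  unfolding star_def using star_diagram_row_eq by (rule conj_part_row_lengths)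

lemma largest_part_star: "largest_part (star m n \<nu>) = m + N 1"
proof (rule antisym)
  show "largest_part (star m n \<nu>) \<le> m + N 1"
  proof (rule largest_part_le)
    fix k assume "k \<in> set (star m n \<nu>)"
    then obtain r where k: "k = card {c. (r, c) \<in> D}" by (auto simp: star_def)
    have "k \<le> card {1..m + N r}" using k card_mono[OF finite_atLeastAtMost star_diagram_row_subset] by simp
    then show "k \<le> m + N 1" using part_le_first[of r] by simp
  qed
  have "{1..m + N 1} \<subseteq> {c. (1, c) \<in> D}"
  proof
    fix c assume "c \<in> {1..m + N 1}"
    then show "c \<in> {c. (1, c) \<in> D}"
      using part_less[of "m + 1 - c"] n_pos by (auto simp: mem_star_diagram_iff)
  qed
  then have "m + N 1 \<le> card {c. (1, c) \<in> D}"
    using star_diagram_row_subset[of 1] by (metis card_atLeastAtMost card_mono diff_Suc_1 finite_atLeastAtMost finite_subset)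
  also have "\<dots> \<le> largest_part (star m n \<nu>)"
  proof (rule le_largest_part)
    have "1 \<in> set [1..<n+1]" using n_pos by auto
    then show "card {c. (1, c) \<in> D} \<in> set (star m n \<nu>)"
      unfolding star_def set_map by (rule imageI)
  qed
  finally show "m + N 1 \<le> largest_part (star m n \<nu>)" .
qed

lemma card_star_column_le_m: "x \<in> {1..m} \<Longrightarrow> card {r\<in>{1..n}. (r, x) \<in> D} = n - N (m + 1 - x)"
proof -
  assume "x \<in> {1..m}"
  then have "{r\<in>{1..n}. (r, x) \<in> D} = {1..n - N (m + 1 - x)}" by (auto simp: mem_star_diagram_iff)
  then show ?thesis by simp
qed

lemma card_star_column_gt_m:
  assumes "1 \<le> j"
  shows "card {r\<in>{1..n}. (r, m + j) \<in> D} = card {i\<in>{1..m}. j \<le> N i}"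
proof -
  have mem: "(r, m + j) \<in> D \<longleftrightarrow> 1 \<le> r \<and> j \<le> N r" for r
    using assms by (auto simp: mem_star_diagram_iff)
  have bound: "r \<le> m \<and> r \<le> n" if "1 \<le> r" "j \<le> N r" for r
  proof -
    have "r \<le> length \<nu>" using that assms part_pos_imp[of r] by auto
    then show ?thesis using that first_part_add_le[of r] length_le by auto
  qed
  have "{r\<in>{1..n}. (r, m + j) \<in> D} = {i\<in>{1..m}. j \<le> N i}"
    using mem bound by auto
  then show ?thesis by simp
qed

lemma has_type_star_iff:
  assumes "finite F" "card F = n"
  shows "has_type F (star m n \<nu>) \<longleftrightarrow>
    (\<forall>i\<in>{1..m}. card {S\<in>F. m + 1 - i \<notin> S} = N i) \<and>
    (\<forall>j\<in>{1..N 1}. card {S\<in>F. m + j \<in> S} = card {i\<in>{1..m}. j \<le> N i})"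
proof -
  have complement: "card {S\<in>F. x \<in> S} = n - N (m + 1 - x) \<longleftrightarrow> card {S\<in>F. x \<notin> S} = N (m + 1 - x)" for x
  proof -
    have "card {S\<in>F. x \<in> S} + card {S\<in>F. x \<notin> S} = n"
      using card_Int_Diff[OF assms(1), of "{S. x \<in> S}"] assms(2) by (simp add: set_diff_eq Int_def)
    then show ?thesis using part_less[of "m + 1 - x"] by linarith
  qed
  have low_columns: "(card {S\<in>F. x \<in> S} = card {r\<in>{1..n}. (r, x) \<in> D})
      \<longleftrightarrow> card {S\<in>F. x \<notin> S} = N (m + 1 - x)" if "x \<in> {1..m}" for x
    using that by (simp only: card_star_column_le_m complement)
  have high_columns: "(card {S\<in>F. m + j \<in> S} = card {r\<in>{1..n}. (r, m + j) \<in> D})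
      \<longleftrightarrow> card {S\<in>F. m + j \<in> S} = card {i\<in>{1..m}. j \<le> N i}" if "j \<in> {1..N 1}" for j
  proof -
    from that have "1 \<le> j" by simp
    then show ?thesis by (simp only: card_star_column_gt_m)
  qed
  have "has_type F (star m n \<nu>) \<longleftrightarrow>
      (\<forall>x\<in>{1..m + N 1}. card {S\<in>F. x \<in> S} = card {r\<in>{1..n}. (r, x) \<in> D})"
    by (simp add: has_type_def largest_part_star conj_part_star)
  also have "\<dots> \<longleftrightarrow> (\<forall>x\<in>{1..m}. card {S\<in>F. x \<notin> S} = N (m + 1 - x)) \<and>
      (\<forall>j\<in>{1..N 1}. card {S\<in>F. m + j \<in> S} = card {i\<in>{1..m}. j \<le> N i})"
    unfolding ball_atLeastAtMost_add_iff
    by (intro conj_cong ball_cong refl) (simp_all only: low_columns high_columns)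
  also have "(\<forall>x\<in>{1..m}. card {S\<in>F. x \<notin> S} = N (m + 1 - x)) \<longleftrightarrow>
      (\<forall>i\<in>{1..m}. card {S\<in>F. m + 1 - i \<notin> S} = N i)"
    by (subst ball_atLeastAtMost_reflect_iff) (intro ball_cong refl, auto)
  finally show ?thesis .
qed

section \<open>The unique family\<close>

definition young :: "(nat \<times> nat) set" where
  "young = {(i, j). i \<in> {1..m} \<and> 1 \<le> j \<and> j \<le> N i}"

definition family :: "nat set set" where
  "family = insert {1..m} (cell_set m ` young)"

lemma young_subset: "young \<subseteq> {1..m} \<times> {1..}"
  by (auto simp: young_def)

lemma young_eq_Sigma: "young = Sigma {1..m} (\<lambda>i. {1..N i})"
  by (auto simp: young_def)

lemma card_young: "card young = n - 1"
  using sum_parts by (simp add: young_eq_Sigma)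

lemma cells_of_family_family: "cells_of_family m family = young"
proof (intro set_eqI iffI)
  fix c assume "c \<in> cells_of_family m family"
  then obtain i j where ij: "c = (i, j)" "(i, j) \<in> {1..m} \<times> {1..}" "cell_set m (i, j) \<in> family"
    by (auto simp: cells_of_family_def)
  then have "cell_set m (i, j) \<noteq> {1..m}" by (intro cell_set_ne_atLeastAtMost) auto
  then obtain c' where c': "c' \<in> young" "cell_set m (i, j) = cell_set m c'"
    using ij(3) by (auto simp: family_def)
  then have "(i, j) = c'" using ij(2) young_subset by (intro inj_onD[OF inj_on_cell_set]) auto
  then show "c \<in> young" using c' ij(1) by simp
next
  fix c assume "c \<in> young"
  then show "c \<in> cells_of_family m family"
    using young_subset by (auto simp: cells_of_family_def family_def)
qed

lemma family_subset: "family \<subseteq> insert {1..m} (cell_set m ` ({1..m} \<times> {1..}))"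
  using young_subset by (auto simp: family_def)

lemma finite_family: "finite family"
  by (simp add: family_def young_eq_Sigma)

lemma card_family: "card family = n"
proof -
  have "{1..m} \<notin> cell_set m ` young"
  proof
    assume "{1..m} \<in> cell_set m ` young"
    then obtain i j where "(i, j) \<in> young" "cell_set m (i, j) = {1..m}" by auto
    then show False using cell_set_ne_atLeastAtMost[of j m i] by (auto simp: young_def)
  qed
  moreover have "card (cell_set m ` young) = n - 1"
    using card_image[OF inj_on_subset[OF inj_on_cell_set young_subset]] card_young by simp
  ultimately show ?thesis
    using n_pos finite_family by (simp add: family_def young_eq_Sigma)
qed

lemma has_shape_family: "has_shape m n family"
proof -
  have "finite S \<and> card S = m \<and> S \<subseteq> {1..}" if "S \<in> family" for S
  proof -
    from that consider "S = {1..m}" | i j where "(i, j) \<in> young" "S = cell_set m (i, j)"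
      by (auto simp: family_def)
    then show ?thesis
    proof cases
      case 2
      then have "i \<in> {1..m}" "1 \<le> j" by (auto simp: young_def)
      moreover have "finite (cell_set m (i, j))" by (simp add: cell_set_def)
      ultimately show ?thesis
        using 2 card_cell_set cell_set_subset by simp
    qed auto
  qed
  then show ?thesis using finite_family card_family by (simp add: has_shape_def)
qed

lemma has_type_family: "has_type family (star m n \<nu>)"
  unfolding has_type_star_iff[OF finite_family card_family]
proof (intro conjI ballI)
  fix i assume i: "i \<in> {1..m}"
  have "card {S\<in>family. m + 1 - i \<notin> S} = card {j. (i, j) \<in> young}"
    using card_not_mem_eq_card_row[OF i family_subset] by (simp only: cells_of_family_family)
  also have "{j. (i, j) \<in> young} = {1..N i}" using i by (auto simp: young_def)
  finally show "card {S\<in>family. m + 1 - i \<notin> S} = N i" by simp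
next
  fix j assume j: "j \<in> {1..N 1}"
  then have "1 \<le> j" by simp
  then have "card {S\<in>family. m + j \<in> S} = card {i. (i, j) \<in> young}"
    using card_mem_eq_card_column[OF _ family_subset] by (simp only: cells_of_family_family)
  also have "{i. (i, j) \<in> young} = {i\<in>{1..m}. j \<le> N i}" using j by (auto simp: young_def)
  finally show "card {S\<in>family. m + j \<in> S} = card {i\<in>{1..m}. j \<le> N i}" .
qed

lemma subset_cell_sets_if_type:
  assumes "has_shape m n F" "has_type F (star m n \<nu>)"
  shows "F \<subseteq> insert {1..m} (cell_set m ` ({1..m} \<times> {1..}))"
proof
  fix S assume S: "S \<in> F"
  have fin: "finite F" and card_F: "card F = n"
    and sets: "\<And>T. T \<in> F \<Longrightarrow> finite T \<and> card T = m \<and> T \<subseteq> {1..}"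
    using assms(1) by (auto simp: has_shape_def)
  have rows: "\<forall>i\<in>{1..m}. card {T\<in>F. m + 1 - i \<notin> T} = N i"
    using assms(2) has_type_star_iff[OF fin card_F] by simp
  have "(\<Sum>T\<in>F. card ({1..m} - T)) = (\<Sum>x\<in>{1..m}. card {T\<in>F. x \<notin> T})"
    using fin by (simp add: sum_card_Diff_eq_sum_card_not_mem)
  also have "\<dots> = (\<Sum>i\<in>{1..m}. card {T\<in>F. m + 1 - i \<notin> T})"
    by (rule sum.reindex_bij_witness[of _ "\<lambda>k. m + 1 - k" "\<lambda>k. m + 1 - k"]) auto
  also have "\<dots> = card F - 1"
    using rows sum_parts card_F by simp
  finally have "card ({1..m} - S) \<le> 1"
    using fin sets S by (intro card_Diff_le_1_if_sum_card_Diff_le) auto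
  then consider "card ({1..m} - S) = 0" | "card ({1..m} - S) = 1" by linarith
  then show "S \<in> insert {1..m} (cell_set m ` ({1..m} \<times> {1..}))"
  proof cases
    case 1
    then have "{1..m} \<subseteq> S" by simp
    then have "{1..m} = S" using sets[OF S] by (intro card_subset_eq) auto
    then show ?thesis by simp
  next
    case 2
    then show ?thesis using sets[OF S] cell_set_if_card_Diff_eq_1 by blast
  qed
qed

lemma cells_of_family_subset_young:
  assumes "has_shape m n F" "has_type F (star m n \<nu>)"
  shows "cells_of_family m F \<subseteq> young"
proof -
  have fin: "finite F" and card_F: "card F = n" using assms(1) by (auto simp: has_shape_def)
  have F_sub: "F \<subseteq> insert {1..m} (cell_set m ` ({1..m} \<times> {1..}))"
    using subset_cell_sets_if_type[OF assms] .
  have rows: "\<forall>i\<in>{1..m}. card {S\<in>F. m + 1 - i \<notin> S} = N i"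
    and cols: "\<forall>j\<in>{1..N 1}. card {S\<in>F. m + j \<in> S} = card {i\<in>{1..m}. j \<le> N i}"
    using assms(2) has_type_star_iff[OF fin card_F] by simp_all
  have fin_cells: "finite (cells_of_family m F)"
  proof (rule finite_imageD)
    show "finite (cell_set m ` cells_of_family m F)"
      using fin by (rule finite_subset[rotated]) (auto simp: cells_of_family_def)
    show "inj_on (cell_set m) (cells_of_family m F)"
      by (rule inj_on_subset[OF inj_on_cell_set]) (auto simp: cells_of_family_def)
  qed
  show ?thesis
    unfolding young_def
  proof (rule subset_left_justified_if_line_counts[OF finite_atLeastAtMost fin_cells])
    show "cells_of_family m F \<subseteq> {1..m} \<times> {1..}" by (auto simp: cells_of_family_def)
    show "card {j. (i, j) \<in> cells_of_family m F} = N i" if "i \<in> {1..m}" for i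
      using rows that card_not_mem_eq_card_row[OF that F_sub] by simp
    show "card {i'. (i', j) \<in> cells_of_family m F} = card {i'\<in>{1..m}. j \<le> N i'}"
      if "i \<in> {1..m}" "1 \<le> j" "j \<le> N i" for i j
      using that cols card_mem_eq_card_column[OF that(2) F_sub] part_le_first[of i] by simp
  qed
qed

lemma eq_family_if_type:
  assumes "has_shape m n F" "has_type F (star m n \<nu>)"
  shows "F = family"
proof -
  have "F \<subseteq> family"
    using subset_cell_sets_if_type[OF assms] cells_of_family_subset_young[OF assms]
    by (auto simp: family_def cells_of_family_def)
  moreover have "card F = n" using assms(1) by (simp add: has_shape_def)
  ultimately show ?thesis using card_subset_eq[OF finite_family] card_family by simp
qed

end

theorem proposition5p2:
  fixes m n :: nat and \<nu> :: "nat list"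
  assumes "1 \<le> n"
    and "is_partition_of (n - 1) \<nu>"
    and "length \<nu> \<le> m"
  shows "\<exists>!F :: nat set set. has_shape m n F \<and> has_type F (star m n \<nu>)"
proof -
  interpret star_setting m n \<nu> using assms by unfold_locales
  show ?thesis
    using has_shape_family has_type_family eq_family_if_type by blast
qed

end
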